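(* Let $a,b$ be positive integers with $a\le b$, and suppose that every nonnegative integer $n$ can be written as $ax^2+by^2+(z^2+zw+w^2)$ with $x,y,z,w\in\mathbb{Z}$. Then $a\in\{1,2\}$. *)

theory Defs
  imports Main
begin

end

theory Submission
  imports Defs
begin

text \<open>Take \<open>n = 2\<close>. If \<open>a \<ge> 3\<close>, then \<open>a x\<^sup>2\<close> and \<open>b y\<^sup>2\<close> are either \<open>0\<close> or at least \<open>3\<close>,
  so \<open>2\<close> would have to be represented by \<open>z\<^sup>2 + z w + w\<^sup>2\<close> alone. But this form is odd unless
  \<open>z\<close> and \<open>w\<close> are both even, in which case it is divisible by \<open>4\<close>.\<close>

lemma eisenstein_form_nonneg: "0 \<le> (z::int)^2 + z * w + w^2"
proof -
  have "4 * (z^2 + z * w + w^2) = (2 * z + w)^2 + 3 * w^2"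
    by (simp add: power2_eq_square algebra_simps)
  moreover have "0 \<le> (2 * z + w)^2 + 3 * w^2"
    by simp
  ultimately have "0 \<le> 4 * (z^2 + z * w + w^2)"
    by (simp only:)
  then show ?thesis
    by simp
qed

lemma even_eisenstein_form_imp_even:
  fixes z w :: int
  assumes "even (z^2 + z * w + w^2)"
  shows "even z \<and> even w"
  using assms by (cases "even z"; cases "even w") auto

lemma eisenstein_form_ne_2: "(z::int)^2 + z * w + w^2 \<noteq> 2"
proof
  assume Q: "z^2 + z * w + w^2 = 2"
  then obtain z' w' where "z = 2 * z'" "w = 2 * w'"
    using even_eisenstein_form_imp_even[of z w] by (auto elim!: evenE)
  then have "z^2 + z * w + w^2 = 4 * (z'^2 + z' * w' + w'^2)"
    by (simp add: power2_eq_square algebra_simps)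
  with Q show False by presburger
qed

lemma scaled_square_eq_0_or_ge:
  fixes c x :: int
  assumes "0 \<le> c"
  shows "c * x^2 = 0 \<or> c \<le> c * x^2"
proof (cases "x = 0")
  case False
  then have "1 \<le> \<bar>x\<bar>"
    by arith
  then have "1 \<le> x^2"
    using abs_le_square_iff[of 1 x] by simp
  then show ?thesis
    using mult_left_mono[OF _ assms] by fastforce
qed simp

theorem lemma3p1:
  fixes a b :: int
  assumes "0 < a" and "a \<le> b"
    and "\<forall>n::int. n \<ge> 0 \<longrightarrow>
           (\<exists>x y z w :: int. n = a * x^2 + b * y^2 + (z^2 + z * w + w^2))"
  shows "a \<in> {1, 2}"
proof (rule ccontr)
  assume "a \<notin> {1, 2}"
  with assms(1) have "3 \<le> a" by auto
  obtain x y z w :: int where two: "2 = a * x^2 + b * y^2 + (z^2 + z * w + w^2)"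
    using assms(3)[rule_format, of 2] by auto
  have "a * x^2 = 0 \<or> a \<le> a * x^2" "b * y^2 = 0 \<or> b \<le> b * y^2"
    using scaled_square_eq_0_or_ge[of a x] scaled_square_eq_0_or_ge[of b y] assms(1,2) by auto
  moreover have "0 \<le> a * x^2" "0 \<le> b * y^2"
    using assms(1,2) by simp_all
  ultimately have "z^2 + z * w + w^2 = 2"
    using two \<open>3 \<le> a\<close> assms(2) eisenstein_form_nonneg[of z w] by linarith
  then show False
    using eisenstein_form_ne_2 by blast
qed

end
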